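(* Let $d\ge 2$, $\xi>0$, and let $\sigma:\xi\mathbb{Z}^d\to\mathbb{R}$ be a generalized mass configuration. Let $R>0$ be such that $\operatorname{supp}\sigma\subset \hat B_R:=B(0,R)\cap\xi\mathbb{Z}^d$, and let $x_1,x_2,x_3,\ldots$ be an infinitely covering sequence of $\hat B_R$. For each $k\ge1$ let $\sigma_k:=T_{x_k}T_{x_{k-1}}\cdots T_{x_1}\sigma$ be the configuration obtained from $\sigma$ after toppling the points $x_1,\ldots,x_k$ in this order, and let $u_k$ be the corresponding $k$th odometer function. Then there exist a generalized mass configuration $\nu$ on $\xi\mathbb{Z}^d$ and a function $u:\xi\mathbb{Z}^d\to\mathbb{R}_+$ such that $\sigma_k(x)\to\nu(x)$ and $u_k(x)\nearrow u(x)$ for every $x\in\xi\mathbb{Z}^d$ as $k\to\infty$. Moreover, writing $\nu=\nu_+-\nu_-$ with $\nu_+=\max(\nu,0)$, $\nu_-=-\min(\nu,0)$, we have $\operatorname{supp}\nu_+\subset\partial\hat B_R$ and $\operatorname{supp}\nu_-\subset\operatorname{supp}\sigma_-$, so that $\nu\ge0$ on $\partial\hat B_R$ and $\nu\le 0$ on $\hat B_R$.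
   Context: A generalized mass configuration on $\xi\mathbb{Z}^d$ is a bounded function $\sigma:\xi\mathbb{Z}^d\to\mathbb{R}$ with finite support; $\sigma_+=\max(\sigma,0)$, $\sigma_-=-\min(\sigma,0)$, and $\operatorname{supp}\sigma=\operatorname{supp}\sigma_+\cup\operatorname{supp}\sigma_-$. For $y,y'\in\xi\mathbb{Z}^d$, $y'\sim y$ means $y'$ is one of the $2d$ lattice neighbours of $y$ at distance $\xi$. The discrete Laplacian is $\Delta f(y)=\frac{1}{2d\xi^2}\sum_{y'\sim y}(f(y')-f(y))$. For $x\in\xi\mathbb{Z}^d$ and a configuration $\eta$, the toppling of $\eta$ at $x$ is $T_x\eta(y):=\eta(y)+\eta_+(x)\,\xi^2\,\Delta\delta_x(y)$, where $\delta_x$ is the discrete delta function at $x$; i.e. if $\eta(x)>0$ the mass $\eta(x)$ is removed from $x$ and $\eta(x)/(2d)$ is added to each neighbour of $x$, and otherwise nothing changes. An infinitely covering sequence of a set $S\subset\xi\mathbb{Z}^d$ is a sequence of points of $S$ in which every point of $S$ appears infinitely often. The $k$th odometer function is $u_k(x):=\xi^2\sum_{1\le j\le k,\ x_j=x}(\sigma_{j-1})_+(x)$ (with $\sigma_0=\sigma$), i.e. $\xi^2$ times the total mass emitted from $x$ during the first $k$ topplings. For $S\subset\xi\mathbb{Z}^d$, the outer boundary is $\partial S:=\{y\notin S:\exists\, y'\in S \text{ with } y\sim y'\}$. $B(a,r)$ denotes the open Euclidean ball in $\mathbb{R}^d$. *)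

theory Defs
  imports "HOL-Analysis.Analysis"
begin

text \<open>Points of the lattice xi Z^d are represented by their integer coordinate
  vectors z :: int^'d; the actual point is xi *R z (see lattice_point).
  The dimension is d = CARD('d).\<close>

definition lattice_point :: "real \<Rightarrow> int^'d \<Rightarrow> real^'d" where
  "lattice_point xi z = xi *\<^sub>R (\<chi> i. real_of_int (z $ i))"

definition nbrs :: "int^'d \<Rightarrow> (int^'d) set" where
  "nbrs z = {z + axis i 1 | i. True} \<union> {z - axis i 1 | i. True}"

definition lattice_nbr :: "int^'d \<Rightarrow> int^'d \<Rightarrow> bool" where
  "lattice_nbr y' y \<longleftrightarrow> y' \<in> nbrs y"

definition support :: "(int^'d \<Rightarrow> real) \<Rightarrow> (int^'d) set" where
  "support f = {z. f z \<noteq> 0}"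

definition pos_part :: "(int^'d \<Rightarrow> real) \<Rightarrow> int^'d \<Rightarrow> real" where
  "pos_part f z = max (f z) 0"

definition neg_part :: "(int^'d \<Rightarrow> real) \<Rightarrow> int^'d \<Rightarrow> real" where
  "neg_part f z = - min (f z) 0"

definition gen_mass_config :: "(int^'d \<Rightarrow> real) \<Rightarrow> bool" where
  "gen_mass_config f \<longleftrightarrow> bounded (range f) \<and> finite (support f)"

definition dlap :: "real \<Rightarrow> (int^'d \<Rightarrow> real) \<Rightarrow> int^'d \<Rightarrow> real" where
  "dlap xi f y = (1 / (2 * real CARD('d) * xi^2)) * (\<Sum>y'\<in>nbrs y. (f y' - f y))"

definition ddelta :: "int^'d \<Rightarrow> int^'d \<Rightarrow> real" where
  "ddelta x y = (if y = x then 1 else 0)"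

definition topple :: "real \<Rightarrow> int^'d \<Rightarrow> (int^'d \<Rightarrow> real) \<Rightarrow> int^'d \<Rightarrow> real" where
  "topple xi x \<eta> y = \<eta> y + pos_part \<eta> x * xi^2 * dlap xi (ddelta x) y"

text \<open>sigma_k = T_{x_k} ... T_{x_1} sigma; the sequence is x 1, x 2, ... (x 0 unused).\<close>
fun topple_seq :: "real \<Rightarrow> (nat \<Rightarrow> int^'d) \<Rightarrow> (int^'d \<Rightarrow> real) \<Rightarrow> nat \<Rightarrow> int^'d \<Rightarrow> real" where
  "topple_seq xi xs \<sigma> 0 = \<sigma>"
| "topple_seq xi xs \<sigma> (Suc k) = topple xi (xs (Suc k)) (topple_seq xi xs \<sigma> k)"

definition odometer :: "real \<Rightarrow> (nat \<Rightarrow> int^'d) \<Rightarrow> (int^'d \<Rightarrow> real) \<Rightarrow> nat \<Rightarrow> int^'d \<Rightarrow> real" where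
  "odometer xi xs \<sigma> k x = xi^2 * (\<Sum>j\<in>{j. 1 \<le> j \<and> j \<le> k \<and> xs j = x}.
        pos_part (topple_seq xi xs \<sigma> (j - 1)) x)"

definition lattice_ball :: "real \<Rightarrow> real \<Rightarrow> (int^'d) set" where
  "lattice_ball xi R = {z. lattice_point xi z \<in> ball 0 R}"

definition outer_boundary :: "(int^'d) set \<Rightarrow> (int^'d) set" where
  "outer_boundary S = {y. y \<notin> S \<and> (\<exists>y'\<in>S. lattice_nbr y y')}"

definition infinitely_covering :: "(nat \<Rightarrow> 'a) \<Rightarrow> 'a set \<Rightarrow> bool" where
  "infinitely_covering xs S \<longleftrightarrow> (\<forall>k\<ge>1. xs k \<in> S) \<and> (\<forall>y\<in>S. infinite {k. k \<ge> 1 \<and> xs k = y})"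

end

theory Submission imports Defs begin

text \<open>Toppling x adds the emitted mass times a fixed kernel supported on x and its neighbours.
  That kernel has total mass 0, so mass is conserved, and its second moment against
  |y|^2 is 1, so the |y|^2-weighted mass grows by exactly the emitted mass. Since toppling never
  pushes a value below min \<sigma> 0 and all topplings stay in a finite set, the weighted mass is
  bounded, hence the total emitted mass is finite. All configurations and odometers then
  converge; a site toppled infinitely often ends up non-positive, and a site can only end up
  negative if it started negative.\<close>

lemma nbrs_eq_ranges: "nbrs y = range (\<lambda>i. y + axis i 1) \<union> range (\<lambda>i. y - axis i 1)"
  unfolding nbrs_def by auto

lemma finite_nbrs [simp]: "finite (nbrs (y::int^'d))"
  unfolding nbrs_eq_ranges by auto

lemma sum_nbrs: "(\<Sum>y'\<in>nbrs y. g y') = (\<Sum>i\<in>UNIV. g (y + axis i 1) + g (y - axis i 1))"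
proof -
  have disj: "range (\<lambda>i. y + axis i 1) \<inter> range (\<lambda>i. y - axis i (1::int)) = {}"
  proof (rule ccontr)
    assume "\<not> ?thesis"
    then obtain i j where "y + axis i 1 = y - axis j (1::int)" by auto
    then have "(y + axis i 1) $ i = (y - axis j (1::int)) $ i" by simp
    then show False by (auto simp: axis_def split: if_splits)
  qed
  have inj_plus: "inj (\<lambda>i. y + axis i (1::int))" by (auto simp: inj_def axis_eq_axis)
  have inj_minus: "inj (\<lambda>i. y - axis i (1::int))" by (auto simp: inj_def axis_eq_axis)
  have "(\<Sum>y'\<in>nbrs y. g y')
      = (\<Sum>y'\<in>range (\<lambda>i. y + axis i 1). g y') + (\<Sum>y'\<in>range (\<lambda>i. y - axis i 1). g y')"
    unfolding nbrs_eq_ranges by (rule sum.union_disjoint) (use disj in auto)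
  also have "\<dots> = (\<Sum>i\<in>UNIV. g (y + axis i 1)) + (\<Sum>i\<in>UNIV. g (y - axis i 1))"
    by (simp add: sum.reindex[OF inj_plus] sum.reindex[OF inj_minus])
  finally show ?thesis by (simp add: sum.distrib)
qed

lemma card_nbrs: "card (nbrs (y::int^'d)) = 2 * CARD('d)"
proof -
  have "real (card (nbrs y)) = (\<Sum>y'\<in>nbrs y. 1)" by simp
  also have "\<dots> = 2 * real CARD('d)" by (subst sum_nbrs) simp
  finally show ?thesis by linarith
qed

lemma not_mem_nbrs_self: "x \<notin> nbrs (x::int^'d)"
proof
  assume "x \<in> nbrs x"
  then obtain i where "x = x + axis i 1 \<or> x = x - axis i (1::int)" unfolding nbrs_def by auto
  then have "x $ i = (x + axis i 1) $ i \<or> x $ i = (x - axis i (1::int)) $ i" by auto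
  then show False by simp
qed

lemma mem_nbrs_commute: "x \<in> nbrs y \<longleftrightarrow> y \<in> nbrs (x::int^'d)"
  unfolding nbrs_def by (auto simp: algebra_simps)

lemma finite_lattice_ball:
  assumes "xi > 0" shows "finite (lattice_ball xi R :: (int^'d) set)"
proof -
  define N where "N = \<lceil>R / xi\<rceil>"
  have "lattice_ball xi R \<subseteq> vec_lambda ` (PiE (UNIV::'d set) (\<lambda>_. {-N..N}))"
  proof
    fix z :: "int^'d" assume "z \<in> lattice_ball xi R"
    then have norm_less: "norm (lattice_point xi z) < R" by (simp add: lattice_ball_def)
    have "z $ i \<in> {-N..N}" for i
    proof -
      have "xi * \<bar>real_of_int (z $ i)\<bar> \<le> xi * norm (\<chi> i. real_of_int (z $ i))"
        using component_le_norm_cart[of "\<chi> i. real_of_int (z $ i)" i] assms by simp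
      also have "\<dots> < R" using norm_less assms by (simp add: lattice_point_def)
      finally have "\<bar>real_of_int (z $ i)\<bar> < R / xi" using assms by (simp add: field_simps)
      then have "\<bar>real_of_int (z $ i)\<bar> \<le> real_of_int N" unfolding N_def
        by (meson le_of_int_ceiling less_le_trans order.strict_implies_order)
      then show ?thesis by auto
    qed
    then show "z \<in> vec_lambda ` (PiE UNIV (\<lambda>_. {-N..N}))"
      by (intro image_eqI[of _ _ "\<lambda>i. z $ i"]) auto
  qed
  moreover have "finite (vec_lambda ` (PiE (UNIV::'d set) (\<lambda>_. {-N..N})))"
    by (intro finite_imageI finite_PiE) auto
  ultimately show ?thesis by (rule finite_subset)
qed

lemma support_pos_part: "support (pos_part f) = {z. 0 < f z}"
  by (auto simp: support_def pos_part_def max_def)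

lemma support_neg_part: "support (neg_part f) = {z. f z < 0}"
  by (auto simp: support_def neg_part_def min_def)

lemma gen_mass_config_if_vanishing_outside:
  assumes "finite G" and "\<And>y. y \<notin> G \<Longrightarrow> f y = 0"
  shows "gen_mass_config f"
proof -
  have "range f \<subseteq> insert 0 (f ` G)" using assms(2) by auto
  then have "finite (range f)" using assms(1) by (meson finite_imageI finite_insert finite_subset)
  moreover have "support f \<subseteq> G" using assms(2) unfolding support_def by auto
  ultimately show ?thesis
    unfolding gen_mass_config_def using assms(1) by (auto intro: finite_subset finite_imp_bounded)
qed

text \<open>topple_kernel x = xi^2 \<Delta>\<delta>_x, which does not depend on xi.\<close>
definition topple_kernel :: "int^'d \<Rightarrow> int^'d \<Rightarrow> real" where
  "topple_kernel x y =
     (if y = x then -1 else if y \<in> nbrs x then 1 / (2 * real CARD('d)) else 0)"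

lemma topple_eq_kernel:
  fixes x :: "int^'d" assumes "xi \<noteq> 0"
  shows "topple xi x \<eta> y = \<eta> y + pos_part \<eta> x * topple_kernel x y"
proof -
  have "(\<Sum>y'\<in>nbrs y. ddelta x y' - ddelta x y)
      = (\<Sum>y'\<in>nbrs y. ddelta x y') - real (card (nbrs y)) * ddelta x y"
    by (simp add: sum_subtractf)
  also have "\<dots> = (if x \<in> nbrs y then 1 else 0) - 2 * real CARD('d) * ddelta x y"
    by (simp add: ddelta_def sum.delta' card_nbrs)
  finally have "xi^2 * dlap xi (ddelta x) y = topple_kernel x y"
    unfolding dlap_def topple_kernel_def using assms not_mem_nbrs_self[of x]
    by (auto simp: ddelta_def mem_nbrs_commute field_simps)
  then show ?thesis unfolding topple_def by (metis mult.assoc)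
qed

lemma topple_kernel_nbr: "y \<in> nbrs (x::int^'d) \<Longrightarrow> topple_kernel x y = 1 / (2 * real CARD('d))"
  using not_mem_nbrs_self[of x] by (auto simp: topple_kernel_def)

lemma topple_kernel_eq_0: "y \<notin> insert x (nbrs x) \<Longrightarrow> topple_kernel x y = 0"
  by (auto simp: topple_kernel_def)

lemma abs_topple_kernel_le_1: "\<bar>topple_kernel (x::int^'d) y\<bar> \<le> 1"
proof -
  have "1 \<le> real CARD('d)" using finite_UNIV_card_ge_0[where 'a='d] by simp
  then have "1 / (2 * real CARD('d)) \<le> 1" by (subst divide_le_eq_1_pos) linarith+
  then show ?thesis unfolding topple_kernel_def by auto
qed

lemma topple_self: "xi \<noteq> 0 \<Longrightarrow> topple xi x \<eta> x = min (\<eta> x) 0"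
  by (simp add: topple_eq_kernel topple_kernel_def pos_part_def)

lemma topple_ge: "xi \<noteq> 0 \<Longrightarrow> y \<noteq> x \<Longrightarrow> \<eta> y \<le> topple xi x \<eta> y"
  by (simp add: topple_eq_kernel topple_kernel_def pos_part_def)

lemma sum_topple_kernel:
  fixes x :: "int^'d"
  assumes "finite G" and "insert x (nbrs x) \<subseteq> G"
  shows "(\<Sum>y\<in>G. topple_kernel x y) = 0"
proof -
  have "(\<Sum>y\<in>G. topple_kernel x y) = (\<Sum>y\<in>insert x (nbrs x). topple_kernel x y)"
    by (rule sum.mono_neutral_right) (use assms topple_kernel_eq_0 in auto)
  also have "\<dots> = -1 + (\<Sum>y\<in>nbrs x. 1 / (2 * real CARD('d)))"
    by (simp add: not_mem_nbrs_self topple_kernel_nbr topple_kernel_def[of x x] cong: sum.cong)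
  finally show ?thesis by (simp add: card_nbrs)
qed

definition sqnorm :: "int^'d \<Rightarrow> real" where
  "sqnorm y = (\<Sum>i\<in>UNIV. (real_of_int (y $ i))^2)"

lemma sqnorm_nonneg: "0 \<le> sqnorm y"
  unfolding sqnorm_def by (simp add: sum_nonneg)

lemma sqnorm_add_diff_axis: "sqnorm (x + axis i 1) + sqnorm (x - axis i 1) = 2 * sqnorm x + 2"
proof -
  have "sqnorm (x + axis i 1) + sqnorm (x - axis i 1)
      = (\<Sum>j\<in>UNIV. 2 * (real_of_int (x $ j))^2 + (if j = i then 2 else 0))"
    unfolding sqnorm_def sum.distrib[symmetric]
    by (rule sum.cong) (auto simp: axis_def power2_eq_square algebra_simps)
  then show ?thesis by (simp add: sum.distrib sqnorm_def sum_distrib_left)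
qed

text \<open>The discrete counterpart of \<Delta>|y|^2 = 2d, the kernel carrying the factor 1/(2d) of dlap.\<close>
lemma sum_sqnorm_topple_kernel:
  fixes x :: "int^'d"
  assumes "finite G" and "insert x (nbrs x) \<subseteq> G"
  shows "(\<Sum>y\<in>G. sqnorm y * topple_kernel x y) = 1"
proof -
  have "(\<Sum>y\<in>G. sqnorm y * topple_kernel x y)
      = (\<Sum>y\<in>insert x (nbrs x). sqnorm y * topple_kernel x y)"
    by (rule sum.mono_neutral_right) (use assms topple_kernel_eq_0 in auto)
  also have "\<dots> = - sqnorm x + (\<Sum>y\<in>nbrs x. sqnorm y) / (2 * real CARD('d))"
    by (simp add: not_mem_nbrs_self topple_kernel_nbr topple_kernel_def[of x x] sum_divide_distrib
        cong: sum.cong)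
  also have "(\<Sum>y\<in>nbrs x. sqnorm y) = (\<Sum>i\<in>(UNIV::'d set). 2 * sqnorm x + 2)"
    by (simp add: sum_nbrs sqnorm_add_diff_axis)
  finally show ?thesis by (simp add: field_simps)
qed

definition toppled_mass :: "real \<Rightarrow> (nat \<Rightarrow> int^'d) \<Rightarrow> (int^'d \<Rightarrow> real) \<Rightarrow> nat \<Rightarrow> real" where
  "toppled_mass xi xs \<sigma> j = pos_part (topple_seq xi xs \<sigma> j) (xs (Suc j))"

lemma toppled_mass_nonneg: "0 \<le> toppled_mass xi xs \<sigma> j"
  by (simp add: toppled_mass_def pos_part_def)

lemma topple_seq_Suc_kernel:
  "xi \<noteq> 0 \<Longrightarrow> topple_seq xi xs \<sigma> (Suc k) y
     = topple_seq xi xs \<sigma> k y + toppled_mass xi xs \<sigma> k * topple_kernel (xs (Suc k)) y"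
  by (simp add: topple_eq_kernel toppled_mass_def)

lemma topple_seq_eq_sum:
  "xi \<noteq> 0 \<Longrightarrow> topple_seq xi xs \<sigma> k y
     = \<sigma> y + (\<Sum>j<k. toppled_mass xi xs \<sigma> j * topple_kernel (xs (Suc j)) y)"
  by (induction k) (simp_all add: topple_seq_Suc_kernel del: topple_seq.simps(2))

lemma topple_seq_ge_min:
  assumes "xi \<noteq> 0" shows "min (\<sigma> y) 0 \<le> topple_seq xi xs \<sigma> k y"
proof (induction k)
  case (Suc k)
  then show ?case
    by (cases "y = xs (Suc k)") (auto simp: topple_self topple_ge assms intro: order_trans)
qed simp

lemma topple_seq_self_nonpos:
  "xi \<noteq> 0 \<Longrightarrow> xs (Suc k) = y \<Longrightarrow> topple_seq xi xs \<sigma> (Suc k) y \<le> 0"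
  by (simp add: topple_self)

lemma topple_seq_eq_0:
  assumes "xi \<noteq> 0" and "\<forall>k. insert (xs (Suc k)) (nbrs (xs (Suc k))) \<subseteq> G"
    and "y \<notin> G" and "\<sigma> y = 0"
  shows "topple_seq xi xs \<sigma> k y = 0"
proof (induction k)
  case (Suc k)
  have "topple_kernel (xs (Suc k)) y = 0"
    using assms(2,3) by (intro topple_kernel_eq_0) blast
  then show ?case using Suc by (simp add: assms(1) topple_seq_Suc_kernel del: topple_seq.simps(2))
qed (simp add: assms(4))

lemma sum_topple_seq:
  assumes "xi \<noteq> 0" and "finite G" and "\<forall>k. insert (xs (Suc k)) (nbrs (xs (Suc k))) \<subseteq> G"
  shows "(\<Sum>y\<in>G. topple_seq xi xs \<sigma> k y) = (\<Sum>y\<in>G. \<sigma> y)"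
proof (induction k)
  case (Suc k)
  then show ?case using sum_topple_kernel[OF assms(2) assms(3)[rule_format]]
    by (simp add: assms(1) topple_seq_Suc_kernel sum.distrib del: topple_seq.simps(2)
        flip: sum_distrib_left)
qed simp

lemma sum_sqnorm_topple_seq:
  assumes "xi \<noteq> 0" and "finite G" and "\<forall>k. insert (xs (Suc k)) (nbrs (xs (Suc k))) \<subseteq> G"
  shows "(\<Sum>y\<in>G. sqnorm y * topple_seq xi xs \<sigma> k y)
    = (\<Sum>y\<in>G. sqnorm y * \<sigma> y) + (\<Sum>j<k. toppled_mass xi xs \<sigma> j)"
proof (induction k)
  case (Suc k)
  have "(\<Sum>y\<in>G. sqnorm y * topple_seq xi xs \<sigma> (Suc k) y)
      = (\<Sum>y\<in>G. sqnorm y * topple_seq xi xs \<sigma> k y)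
        + toppled_mass xi xs \<sigma> k * (\<Sum>y\<in>G. sqnorm y * topple_kernel (xs (Suc k)) y)"
    by (simp add: assms(1) topple_seq_Suc_kernel sum.distrib sum_distrib_left algebra_simps
        del: topple_seq.simps(2))
  then show ?case using Suc sum_sqnorm_topple_kernel[OF assms(2) assms(3)[rule_format]] by simp
qed simp

lemma summable_toppled_mass:
  assumes "xi \<noteq> 0" and "finite G" and "\<forall>k. insert (xs (Suc k)) (nbrs (xs (Suc k))) \<subseteq> G"
  shows "summable (toppled_mass xi xs \<sigma>)"
proof (rule summableI_nonneg_bounded)
  define s where "s = topple_seq xi xs \<sigma>"
  define m where "m y = min (\<sigma> y) 0" for y
  define Q where "Q = (\<Sum>y\<in>G. sqnorm y)"
  fix k
  have "sqnorm y \<le> Q" if "y \<in> G" for y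
    unfolding Q_def using assms(2) that sqnorm_nonneg by (intro member_le_sum) auto
  then have "(\<Sum>y\<in>G. sqnorm y * (s k y - m y)) \<le> (\<Sum>y\<in>G. Q * (s k y - m y))"
    using topple_seq_ge_min[OF assms(1)] by (intro sum_mono mult_right_mono) (auto simp: s_def m_def)
  also have "\<dots> = Q * ((\<Sum>y\<in>G. \<sigma> y) - (\<Sum>y\<in>G. m y))"
    using sum_topple_seq[OF assms] by (simp add: s_def sum_subtractf flip: sum_distrib_left)
  finally show "(\<Sum>j<k. toppled_mass xi xs \<sigma> j)
      \<le> Q * ((\<Sum>y\<in>G. \<sigma> y) - (\<Sum>y\<in>G. m y)) + (\<Sum>y\<in>G. sqnorm y * m y) - (\<Sum>y\<in>G. sqnorm y * \<sigma> y)"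
    using sum_sqnorm_topple_seq[OF assms]
    by (simp add: s_def sum_subtractf right_diff_distrib)
qed (rule toppled_mass_nonneg)

lemma topple_seq_tendsto:
  assumes "xi \<noteq> 0" and "summable (toppled_mass xi xs \<sigma>)"
  shows "(\<lambda>k. topple_seq xi xs \<sigma> k y)
    \<longlonglongrightarrow> \<sigma> y + (\<Sum>j. toppled_mass xi xs \<sigma> j * topple_kernel (xs (Suc j)) y)"
proof -
  have "summable (\<lambda>j. toppled_mass xi xs \<sigma> j * topple_kernel (xs (Suc j)) y)"
  proof (rule summable_comparison_test'[OF assms(2)])
    fix j
    show "norm (toppled_mass xi xs \<sigma> j * topple_kernel (xs (Suc j)) y) \<le> toppled_mass xi xs \<sigma> j"
      using toppled_mass_nonneg[of xi xs \<sigma> j] abs_topple_kernel_le_1[of "xs (Suc j)" y]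
      by (simp add: abs_mult mult_left_le)
  qed
  then show ?thesis
    unfolding topple_seq_eq_sum[OF assms(1)] by (intro tendsto_add tendsto_const summable_LIMSEQ)
qed

lemma odometer_eq_sum:
  "odometer xi xs \<sigma> k x = xi^2 * (\<Sum>j<k. if xs (Suc j) = x then toppled_mass xi xs \<sigma> j else 0)"
proof -
  have indices: "{j. 1 \<le> j \<and> j \<le> k \<and> xs j = x} = Suc ` {j \<in> {..<k}. xs (Suc j) = x}"
  proof (intro equalityI subsetI)
    fix j assume "j \<in> {j. 1 \<le> j \<and> j \<le> k \<and> xs j = x}"
    then show "j \<in> Suc ` {j \<in> {..<k}. xs (Suc j) = x}"
      by (intro image_eqI[of _ _ "j - 1"]) auto
  qed auto
  have "odometer xi xs \<sigma> k x = xi^2 * (\<Sum>j\<in>{j \<in> {..<k}. xs (Suc j) = x}. toppled_mass xi xs \<sigma> j)"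
    unfolding odometer_def indices by (subst sum.reindex) (auto simp: toppled_mass_def)
  then show ?thesis by (simp only: sum.inter_filter[OF finite_lessThan])
qed

lemma odometer_incseq_tendsto:
  fixes x :: "int^'d"
  assumes "summable (toppled_mass xi xs \<sigma>)"
  defines "c j \<equiv> if xs (Suc j) = x then toppled_mass xi xs \<sigma> j else 0"
  shows "incseq (\<lambda>k. odometer xi xs \<sigma> k x)"
    and "(\<lambda>k. odometer xi xs \<sigma> k x) \<longlonglongrightarrow> xi^2 * suminf c"
    and "0 \<le> xi^2 * suminf c"
proof -
  have c_nonneg: "0 \<le> c j" for j by (simp add: c_def toppled_mass_nonneg)
  have "summable c"
    by (rule summable_comparison_test'[OF assms(1)]) (auto simp: c_def toppled_mass_nonneg)
  then show "(\<lambda>k. odometer xi xs \<sigma> k x) \<longlonglongrightarrow> xi^2 * suminf c"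
    unfolding odometer_eq_sum c_def[symmetric] by (intro tendsto_mult tendsto_const summable_LIMSEQ)
  show "0 \<le> xi^2 * suminf c"
    using \<open>summable c\<close> c_nonneg by (simp add: suminf_nonneg)
  show "incseq (\<lambda>k. odometer xi xs \<sigma> k x)"
    unfolding odometer_eq_sum c_def[symmetric]
    by (intro incseq_SucI) (simp add: c_nonneg mult_left_mono)
qed

lemma limit_nonpos_if_toppled_infinitely_often:
  assumes "xi \<noteq> 0" and "infinite {k. 1 \<le> k \<and> xs k = y}"
    and "(\<lambda>k. topple_seq xi xs \<sigma> k y) \<longlonglongrightarrow> l"
  shows "l \<le> 0"
proof (rule ccontr)
  assume "\<not> l \<le> 0"
  then have "\<forall>\<^sub>F k in sequentially. 0 < topple_seq xi xs \<sigma> k y"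
    using assms(3) by (intro order_tendstoD) auto
  then obtain N where N: "\<And>k. N \<le> k \<Longrightarrow> 0 < topple_seq xi xs \<sigma> k y"
    by (auto simp: eventually_sequentially)
  obtain k where k: "N < k" "1 \<le> k" "xs k = y"
    using assms(2) unfolding infinite_nat_iff_unbounded by blast
  then have "topple_seq xi xs \<sigma> (Suc (k - 1)) y \<le> 0"
    by (intro topple_seq_self_nonpos[OF assms(1)]) simp
  with k N[of k] show False by simp
qed

theorem proposition3p1:
  fixes xi R :: real and \<sigma> :: "int^'d \<Rightarrow> real" and xs :: "nat \<Rightarrow> int^'d"
  assumes "CARD('d) \<ge> 2"
    and "xi > 0"
    and "gen_mass_config \<sigma>"
    and "R > 0"
    and "support \<sigma> \<subseteq> lattice_ball xi R"
    and "infinitely_covering xs (lattice_ball xi R)"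
  shows "\<exists>\<nu> u. gen_mass_config \<nu> \<and> (\<forall>x. u x \<ge> 0)
     \<and> (\<forall>x. (\<lambda>k. topple_seq xi xs \<sigma> k x) \<longlonglongrightarrow> \<nu> x)
     \<and> (\<forall>x. incseq (\<lambda>k. odometer xi xs \<sigma> k x) \<and> (\<lambda>k. odometer xi xs \<sigma> k x) \<longlonglongrightarrow> u x)
     \<and> support (pos_part \<nu>) \<subseteq> outer_boundary (lattice_ball xi R)
     \<and> support (neg_part \<nu>) \<subseteq> support (neg_part \<sigma>)"
proof -
  define B where "B = (lattice_ball xi R :: (int^'d) set)"
  define G where "G = B \<union> (\<Union>x\<in>B. nbrs x)"
  define p where "p = toppled_mass xi xs \<sigma>"
  define \<nu> where "\<nu> y = \<sigma> y + (\<Sum>j. p j * topple_kernel (xs (Suc j)) y)" for y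
  define u where "u x = xi^2 * (\<Sum>j. if xs (Suc j) = x then p j else 0)" for x
  have xi: "xi \<noteq> 0" using assms(2) by simp
  have "finite G" unfolding G_def B_def using finite_lattice_ball[OF assms(2)] by auto
  moreover have G: "\<forall>k. insert (xs (Suc k)) (nbrs (xs (Suc k))) \<subseteq> G"
    using assms(6) unfolding infinitely_covering_def G_def B_def by auto
  ultimately have "summable p" unfolding p_def by (rule summable_toppled_mass[OF xi])
  then have lim: "(\<lambda>k. topple_seq xi xs \<sigma> k y) \<longlonglongrightarrow> \<nu> y" for y
    unfolding \<nu>_def p_def by (rule topple_seq_tendsto[OF xi])
  have \<nu>_outside: "\<nu> y = 0" if "y \<notin> G" for y
  proof -
    have "\<sigma> y = 0" using that assms(5) unfolding G_def B_def support_def by auto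
    then show ?thesis
      using LIMSEQ_unique[OF lim] topple_seq_eq_0[OF xi G that] by simp
  qed
  have \<nu>_nonpos: "\<nu> y \<le> 0" if "y \<in> B" for y
    using assms(6) that unfolding infinitely_covering_def B_def
    by (intro limit_nonpos_if_toppled_infinitely_often[OF xi _ lim]) auto
  have pos: "support (pos_part \<nu>) \<subseteq> outer_boundary B"
  proof
    fix y assume "y \<in> support (pos_part \<nu>)"
    then have "y \<in> G" "y \<notin> B" using \<nu>_outside \<nu>_nonpos unfolding support_pos_part by force+
    then show "y \<in> outer_boundary B"
      unfolding G_def outer_boundary_def lattice_nbr_def by auto
  qed
  have "\<sigma> y < 0" if "\<nu> y < 0" for y
    using that topple_seq_ge_min[OF xi, of \<sigma> y xs] LIMSEQ_le_const[OF lim, of 0 y] by force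
  then have neg: "support (neg_part \<nu>) \<subseteq> support (neg_part \<sigma>)"
    unfolding support_neg_part by auto
  have odometer: "incseq (\<lambda>k. odometer xi xs \<sigma> k x)" "(\<lambda>k. odometer xi xs \<sigma> k x) \<longlonglongrightarrow> u x"
    "0 \<le> u x" for x
    using odometer_incseq_tendsto[OF \<open>summable p\<close>[unfolded p_def]] unfolding u_def p_def by auto
  show ?thesis
    using gen_mass_config_if_vanishing_outside[OF \<open>finite G\<close> \<nu>_outside] lim odometer pos neg
    unfolding B_def by (intro exI[of _ \<nu>] exI[of _ u]) auto
qed

end
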